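(* Assume the hypotheses of Theorem 2 (A1, A2, A3(D), $\beta\in[0,1)$, $0<\eta<2N/(\sigma_{\max}^2H_{\ell^{-1}(N\mathcal{L}(w(1)))})$) and that the dataset is generic as described in the context. Let $\tilde w$ be any vector with $\frac{\eta}{N}e^{-\langle x_i,\tilde w\rangle}=v_i$ for all $x_i\in S_s$. For $t\ge1$ define $r(t)=w(t)-\ln(t)\hat w-\tilde w$ and $$g(t)=\tfrac12\|r(t)\|^2+\tfrac{\beta}{1-\beta}\langle r(t),w(t)-w(t-1)\rangle-\tfrac{\beta}{1-\beta}\sum_{\tau=2}^t\langle r(\tau)-r(\tau-1),w(\tau)-w(\tau-1)\rangle,$$ where $w(0)=w(1)$ and $w(t)$ are the GDM iterates. Then: (i) $\sup_t\|r(t)\|<\infty$ if and only if $\sup_tg(t)<\infty$; (ii) $\sup_{T}\sum_{t=1}^{T}(g(t+1)-g(t))<\infty$; in particular $g$ is bounded above and hence $\sup_t\|r(t)\|<\infty$.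
   Context: Setting. The data are $S=\{x_1,\dots,x_N\}\subset\mathbb{R}^d$, with labels absorbed. The empirical loss is $\mathcal{L}(w)=\frac1N\sum_i\ell(\langle w,x_i\rangle)$. $\sigma_{\max}$ is the spectral norm of $(x_1,\dots,x_N)$. A1: there is $w$ with $\langle w,x_i\rangle>0$ for all $i$. A2: $\ell$ is differentiable, $\ell'<0$, $\ell(x),\ell'(x)\to0$ as $x\to\infty$, and $\limsup_{x\to-\infty}\ell'(x)<0$. There are positive $\mu_\pm,x_\pm$ with $-\ell'(x)\le(1+e^{-\mu_+x})e^{-x}$ for $x>x_+$ and $-\ell'(x)\ge(1-e^{-\mu_-x})e^{-x}$ for $x>x_-$. $\ell^{-1}$ is the inverse of $\ell:\mathbb{R}\to(0,\infty)$. A3(D): $H_{s_0}$ is the smallest constant with $|\ell'(x)-\ell'(y)|\le H_{s_0}|x-y|$ for $x,y\ge s_0$ (finite for every $s_0$). Max-margin: $\hat w=\arg\min\{\|w\|^2:\langle w,x_i\rangle\ge1\ \forall i\}$. The support set is $S_s=\{x_i:\langle x_i,\hat w\rangle=1\}$. Generic dataset: the dataset lies outside a Lebesgue-null set of $\mathbb{R}^{d\times N}$. For such datasets, every $d$ data points are linearly independent and there is a unique vector $v=(v_1,\dots,v_N)$ with $\hat w=\sum_iv_ix_i$, $v_i>0$ for $x_i\in S_s$ and $v_i=0$ otherwise. In particular $|S_s|\le d$, so a vector $\tilde w$ as in the claim exists. GDM: $m(0)=0$, $m(t)=\beta m(t-1)+(1-\beta)\nabla\mathcal{L}(w(t))$,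 $w(t+1)=w(t)-\eta m(t)$. *)

theory Defs
  imports "HOL-Analysis.Analysis"
begin

text \<open>Data: a family X :: 'n \<Rightarrow> real^'d of N = CARD('n) points in R^d (labels absorbed).
  The loss is l with derivative l'.\<close>

definition emp_loss :: "(real \<Rightarrow> real) \<Rightarrow> ('n::finite \<Rightarrow> real^'d) \<Rightarrow> real^'d \<Rightarrow> real" where
  "emp_loss l X w = (1 / real CARD('n)) * (\<Sum>i\<in>UNIV. l (w \<bullet> X i))"

definition emp_grad :: "(real \<Rightarrow> real) \<Rightarrow> ('n::finite \<Rightarrow> real^'d) \<Rightarrow> real^'d \<Rightarrow> real^'d" where
  "emp_grad l' X w = (1 / real CARD('n)) *\<^sub>R (\<Sum>i\<in>UNIV. l' (w \<bullet> X i) *\<^sub>R X i)"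

text \<open>Spectral norm of the d x N matrix (x_1,...,x_N), i.e. operator norm of c \<mapsto> \<Sum> c_i x_i.\<close>
definition sigma_max :: "('n::finite \<Rightarrow> real^'d) \<Rightarrow> real" where
  "sigma_max X = onorm (\<lambda>c::real^'n. \<Sum>i\<in>UNIV. (c $ i) *\<^sub>R X i)"

definition lip_H :: "(real \<Rightarrow> real) \<Rightarrow> real \<Rightarrow> real" where
  "lip_H l' s0 = Inf {C. C \<ge> 0 \<and> (\<forall>x y. x \<ge> s0 \<longrightarrow> y \<ge> s0 \<longrightarrow> \<bar>l' x - l' y\<bar> \<le> C * \<bar>x - y\<bar>)}"

definition max_margin :: "('n::finite \<Rightarrow> real^'d) \<Rightarrow> real^'d" where
  "max_margin X = (THE w. (\<forall>i. w \<bullet> X i \<ge> 1) \<and>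
      (\<forall>u. (\<forall>i. u \<bullet> X i \<ge> 1) \<longrightarrow> norm w ^ 2 \<le> norm u ^ 2))"

definition support_set :: "('n::finite \<Rightarrow> real^'d) \<Rightarrow> 'n set" where
  "support_set X = {i. X i \<bullet> max_margin X = 1}"

text \<open>GDM state (w(t), m(t)): m(0) = 0, w(t+1) = w(t) - \<eta> m(t),
  m(t) = \<beta> m(t-1) + (1-\<beta>) grad L(w(t)). The initial point is w(0) = w0 (so w(1) = w(0)).\<close>
fun gdm_state :: "(real \<Rightarrow> real) \<Rightarrow> ('n::finite \<Rightarrow> real^'d) \<Rightarrow> real \<Rightarrow> real \<Rightarrow> real^'d \<Rightarrow> nat
    \<Rightarrow> (real^'d) \<times> (real^'d)" where
  "gdm_state l' X \<beta> \<eta> w0 0 = (w0, 0)"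
| "gdm_state l' X \<beta> \<eta> w0 (Suc t) =
     (let (w, m) = gdm_state l' X \<beta> \<eta> w0 t; w' = w - \<eta> *\<^sub>R m
      in (w', \<beta> *\<^sub>R m + (1 - \<beta>) *\<^sub>R emp_grad l' X w'))"

definition gdm_w :: "(real \<Rightarrow> real) \<Rightarrow> ('n::finite \<Rightarrow> real^'d) \<Rightarrow> real \<Rightarrow> real \<Rightarrow> real^'d \<Rightarrow> nat \<Rightarrow> real^'d" where
  "gdm_w l' X \<beta> \<eta> w0 t = fst (gdm_state l' X \<beta> \<eta> w0 t)"

definition res_r :: "(real \<Rightarrow> real) \<Rightarrow> ('n::finite \<Rightarrow> real^'d) \<Rightarrow> real \<Rightarrow> real \<Rightarrow> real^'d \<Rightarrow> real^'d \<Rightarrow> nat \<Rightarrow> real^'d" where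
  "res_r l' X \<beta> \<eta> w0 wt t = gdm_w l' X \<beta> \<eta> w0 t - ln (real t) *\<^sub>R max_margin X - wt"

definition pot_g :: "(real \<Rightarrow> real) \<Rightarrow> ('n::finite \<Rightarrow> real^'d) \<Rightarrow> real \<Rightarrow> real \<Rightarrow> real^'d \<Rightarrow> real^'d \<Rightarrow> nat \<Rightarrow> real" where
  "pot_g l' X \<beta> \<eta> w0 wt t =
     (let r = res_r l' X \<beta> \<eta> w0 wt; w = gdm_w l' X \<beta> \<eta> w0 in
      (1/2) * norm (r t) ^ 2 + (\<beta> / (1 - \<beta>)) * (r t \<bullet> (w t - w (t - 1)))
      - (\<beta> / (1 - \<beta>)) * (\<Sum>\<tau>=2..t. (r \<tau> - r (\<tau> - 1)) \<bullet> (w \<tau> - w (\<tau> - 1))))"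

end

theory Submission
  imports Defs
begin

(* Along the heavy-ball iteration the energy
     L(w(t+1)) + beta/(2 eta (1-beta)) |w(t+1) - w(t)|^2
   decreases by at least (1/eta - sigma_max^2 H / (2N)) |w(t+2) - w(t+1)|^2 per step, provided all
   margins stay above s0 = l^-1(N L(w(1))), the region where l' is H-Lipschitz; the decrease itself
   keeps the iterates in that region.  Hence the steps are square summable, the gradient tends to 0
   and, by separability, every margin tends to infinity.
   A direct computation gives
     g(t+1) - g(t) = <- eta grad L(w(t)) - (ln(t+1) - ln t) w_hat, r(t)> + |r(t+1) - r(t)|^2 / 2.
   Splitting the inner product over the data, the exponential tail of l makes each summand
   eventually O(t^-p) with p > 1: for a support vector the choice of w_tilde balances
   -(eta/N) l'(<w(t), x_i>) against v_i (ln(t+1) - ln t), for the other points the margin of w_hat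
   exceeds 1.  So the increments of g have bounded partial sums, g is bounded above, and since g
   differs from |r|^2/2 by O(|r|) + O(1), r is bounded. *)

lemma mult_exp_neg_le_one: "u * exp (- u) \<le> (1::real)"
proof -
  have "u \<le> exp u" using exp_ge_add_one_self[of u] by linarith
  then have "u * exp (- u) \<le> exp u * exp (- u)" by (intro mult_right_mono) auto
  then show ?thesis by (simp add: exp_minus)
qed

lemma ln_Suc_diff_bounds:
  fixes t :: real assumes "t \<ge> 1"
  shows "ln (t + 1) - ln t \<le> 1 / t" "1 / (t + 1) \<le> ln (t + 1) - ln t"
proof -
  have "1 + 1 / t = (t + 1) / t" using assms by (simp add: field_simps)
  then have "ln (t + 1) - ln t = ln (1 + 1 / t)" using assms by (simp add: ln_div)
  then show "ln (t + 1) - ln t \<le> 1 / t" using assms by (simp add: ln_add_one_self_le_self)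
  have "ln (t / (t + 1)) \<le> t / (t + 1) - 1" using assms by (intro ln_le_minus_one) simp
  also have "t / (t + 1) - 1 = - (1 / (t + 1))" using assms by (simp add: field_simps)
  finally show "1 / (t + 1) \<le> ln (t + 1) - ln t" using assms by (simp add: ln_div)
qed

lemma summable_Suc_powr: "p > 1 \<Longrightarrow> summable (\<lambda>k. real (Suc k) powr - p)"
  using summable_Suc_iff[of "\<lambda>n. real n powr - p"] by (simp add: summable_real_powr_iff)

lemma exp_mult_ln: "(t::real) > 0 \<Longrightarrow> exp (c * ln t) = t powr c"
  by (simp add: powr_def mult.commute)

lemma bounded_partial_sums_if_eventually_le_summable:
  fixes f b :: "nat \<Rightarrow> real"
  assumes "summable b" "\<And>k. b k \<ge> 0" "eventually (\<lambda>k. f k \<le> b k) sequentially"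
  shows "\<exists>C. \<forall>n. (\<Sum>k<n. f k) \<le> C"
proof -
  obtain N where N: "\<And>k. k \<ge> N \<Longrightarrow> f k \<le> b k"
    using assms(3) unfolding eventually_sequentially by blast
  define h where "h k = (if k < N then \<bar>f k\<bar> else 0) + b k" for k
  have "summable h"
    unfolding h_def by (intro summable_add assms(1) summable_finite[of "{..<N}"]) auto
  moreover have "f k \<le> h k" "0 \<le> h k" for k
    using N[of k] assms(2)[of k] by (auto simp: h_def)
  ultimately have "(\<Sum>k<n. f k) \<le> suminf h" for n
    using sum_mono[of "{..<n}" f h] sum_le_suminf[of h "{..<n}"] by fastforce
  then show ?thesis by blast
qed

lemma le_max_one_if_sq_le:
  fixes x A B :: real
  assumes "x \<ge> 0" "x^2 \<le> A + B * x" "A \<ge> 0" "B \<ge> 0"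
  shows "x \<le> max 1 (A + B)"
proof (cases "x \<le> 1")
  case False
  then have "x * x \<le> (A + B) * x"
    using assms mult_le_cancel_left1[of A x] by (simp add: power2_eq_square algebra_simps)
  then show ?thesis using False by simp
qed simp

lemma norm_diff_scaleR_sq_le:
  fixes a w :: "'a::real_normed_vector"
  shows "norm (a - c *\<^sub>R w) ^ 2 \<le> 2 * norm a ^ 2 + 2 * c^2 * norm w ^ 2"
proof -
  have "norm (a - c *\<^sub>R w) ^ 2 \<le> (norm a + \<bar>c\<bar> * norm w) ^ 2"
    using norm_triangle_ineq4[of a "c *\<^sub>R w"] by (intro power_mono) auto
  also have "\<dots> \<le> 2 * norm a ^ 2 + 2 * c^2 * norm w ^ 2"
    using sum_squares_ge_zero[of "norm a - \<bar>c\<bar> * norm w" 0]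
    by (simp add: power2_eq_square algebra_simps)
  finally show ?thesis .
qed

lemma abs_inner_le_half_sq:
  fixes a b :: "'a::real_inner"
  shows "\<bar>a \<bullet> b\<bar> \<le> (1/2) * norm a ^ 2 + (1/2) * norm b ^ 2"
proof -
  have "\<bar>a \<bullet> b\<bar> \<le> norm a * norm b" by (rule Cauchy_Schwarz_ineq2)
  also have "\<dots> \<le> (1/2) * norm a ^ 2 + (1/2) * norm b ^ 2"
    using sum_squares_ge_zero[of "norm a - norm b" 0] by (simp add: power2_eq_square algebra_simps)
  finally show ?thesis .
qed

lemma exp_neg_margin:
  fixes t :: real assumes "t > 0"
  shows "exp (- (\<theta> * ln t + a + u)) = exp (- a) * t powr - \<theta> * exp (- u)"
proof -
  have "- (\<theta> * ln t + a + u) = - a + - \<theta> * ln t + - u" by simp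
  then show ?thesis using assms by (simp only: exp_add exp_mult_ln)
qed

lemma scaled_exp_neg_margin:
  fixes t :: real assumes "t > 0" "K * exp (- a) = v"
  shows "K * exp (- (ln t + a + u)) = v * exp (- u) / t"
  using exp_neg_margin[of t 1 a u] assms by (simp add: powr_minus_divide)

lemma powr_neg_div_self:
  fixes t :: real assumes "t > 0"
  shows "t powr - \<mu> / t = t powr - (1 + \<mu>)"
proof -
  have "t powr - (1 + \<mu>) = t powr (- \<mu> - 1)" by (rule arg_cong[where f = "(powr) t"]) simp
  then have "t powr - (1 + \<mu>) = t powr (- \<mu>) / t powr 1" by (simp only: powr_diff)
  then show ?thesis using assms by simp
qed

text \<open>In the following bounds on one summand of the drift, \<open>m = \<theta> ln t + a + u\<close> is the margin of a
  data point at time \<open>t\<close>, split along \<open>w_hat\<close>, \<open>w_tilde\<close> and the residual; \<open>y = - l' m\<close>,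
  \<open>K = \<eta> / N\<close>, and \<open>\<delta> = ln (t + 1) - ln t\<close>.\<close>

lemma nonsupport_term_le:
  fixes y u m t a \<theta> :: real
  assumes "0 < y" "y \<le> 2 * exp (- m)" "m = \<theta> * ln t + a + u" "t > 0"
  shows "y * u \<le> 2 * exp (- a) * t powr - \<theta>"
proof (cases "u \<le> 0")
  case True
  then have "y * u \<le> 0" using assms(1) by (simp add: mult_nonneg_nonpos)
  moreover have "0 \<le> 2 * exp (- a) * t powr - \<theta>" by simp
  ultimately show ?thesis by linarith
next
  case False
  then have "y * u \<le> 2 * exp (- m) * u" using assms by (intro mult_right_mono) auto
  also have "\<dots> = 2 * exp (- a) * t powr - \<theta> * (u * exp (- u))"
    using exp_neg_margin[OF assms(4)] assms(3) by simp
  also have "\<dots> \<le> 2 * exp (- a) * t powr - \<theta>"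
    using mult_exp_neg_le_one[of u] by (simp add: mult_left_le)
  finally show ?thesis .
qed

lemma mult_exp_neg_div_sub_le:
  fixes u t :: real assumes u: "u \<ge> 0" and t: "t \<ge> 1"
  shows "u * exp (- u) / t - u / (t + 1) \<le> 1 / t^2"
proof (cases "u \<le> 1")
  case True
  have "u * exp (- u) / t \<le> u / t" using u t by (simp add: divide_right_mono mult_left_le)
  moreover have "u / t - u / (t + 1) = u / (t * (t + 1))" using t by (simp add: field_simps)
  moreover have "u / (t * (t + 1)) \<le> 1 / (t * (t + 1))" using True t by (intro divide_right_mono) auto
  moreover have "1 / (t * (t + 1)) \<le> 1 / t^2" using t by (intro divide_left_mono) (auto simp: power2_eq_square)
  ultimately show ?thesis by linarith
next
  case False
  have "exp (- u) \<le> exp (- 1)" using False by simp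
  also have "exp (- 1::real) \<le> 1 / 2"
    using exp_ge_add_one_self[of 1] by (simp add: exp_minus field_simps)
  finally have "u * exp (- u) \<le> u * (1 / 2)" using False by (intro mult_left_mono) auto
  then have "u * exp (- u) / t \<le> u / 2 / t" using t by (intro divide_right_mono) auto
  also have "\<dots> \<le> u / (t + 1)" using u t by (simp add: frac_le)
  finally have "u * exp (- u) / t \<le> u / (t + 1)" .
  moreover have "0 \<le> 1 / t^2" by simp
  ultimately show ?thesis by linarith
qed

lemma support_term_le_of_nonneg:
  fixes y u m t a \<mu> K v \<delta> :: real
  assumes y: "y \<le> (1 + exp (- \<mu> * m)) * exp (- m)" and u: "u \<ge> 0"
    and m: "m = ln t + a + u" and t: "t \<ge> 1" and \<mu>: "\<mu> > 0"
    and K: "K > 0" "K * exp (- a) = v" and \<delta>: "1 / (t + 1) \<le> \<delta>"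
  shows "K * y * u - \<delta> * v * u \<le> v * (exp (- \<mu> * a) * t powr - (1 + \<mu>) + t powr - 2)"
proof -
  have v: "v > 0" using K by auto
  define c where "c = exp (- \<mu> * a) * t powr - \<mu>"
  have Km: "K * exp (- m) = v * exp (- u) / t"
    using scaled_exp_neg_margin[OF _ K(2)] m t by simp
  have "exp (- \<mu> * m) = c * exp (- (\<mu> * u))"
    using exp_neg_margin[of t \<mu> "\<mu> * a" "\<mu> * u"] m t by (simp add: c_def algebra_simps)
  also have "\<dots> \<le> c" using u \<mu> by (simp add: c_def mult_left_le)
  finally have "exp (- \<mu> * m) \<le> c" .
  have "K * y * u \<le> K * ((1 + exp (- \<mu> * m)) * exp (- m)) * u"
    using y u K by (intro mult_right_mono mult_left_mono) auto
  also have "\<dots> = (K * exp (- m)) * u * (1 + exp (- \<mu> * m))" by (simp add: algebra_simps)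
  also have "\<dots> = v * (u * exp (- u) / t) * (1 + exp (- \<mu> * m))" unfolding Km by simp
  also have "\<dots> \<le> v * (u * exp (- u) / t) * (1 + c)"
    using \<open>exp (- \<mu> * m) \<le> c\<close> v u t by (intro mult_left_mono) auto
  also have "\<dots> \<le> v * (u * exp (- u) / t) + v * (c / t)"
    using mult_exp_neg_le_one[of u] v t c_def
    by (simp add: distrib_left mult_left_mono divide_right_mono mult_left_le)
  finally have A: "K * y * u \<le> v * (u * exp (- u) / t) + v * (c / t)" .
  have "c / t = exp (- \<mu> * a) * t powr - (1 + \<mu>)"
    using t unfolding c_def by (simp only: times_divide_eq_right[symmetric] powr_neg_div_self)
  moreover have "t powr - 2 = 1 / t^2" using t by (simp add: powr_minus_divide powr_realpow)
  ultimately have rhs: "v * (exp (- \<mu> * a) * t powr - (1 + \<mu>) + t powr - 2) = v * (c / t) + v * (1 / t^2)"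
    by (simp add: distrib_left)
  have "1 / (t + 1) * (v * u) \<le> \<delta> * (v * u)" using \<delta> v u by (intro mult_right_mono) auto
  then have "v * u / (t + 1) \<le> \<delta> * v * u" by (simp add: mult.assoc)
  moreover have "v * (u * exp (- u) / t - u / (t + 1)) \<le> v * (1 / t^2)"
    using mult_exp_neg_div_sub_le[OF u t] v by (intro mult_left_mono) auto
  moreover have "v * (u * exp (- u) / t - u / (t + 1)) = v * (u * exp (- u) / t) - v * u / (t + 1)"
    by (simp add: algebra_simps)
  ultimately show ?thesis unfolding rhs using A by linarith
qed

lemma exp_excess_le:
  fixes b \<mu> c :: real
  assumes b: "b > 0" and \<mu>: "\<mu> > 0" and c: "c \<ge> 0" and half: "c * exp (\<mu> * b) \<le> 1 / 2"
  shows "b * (1 - exp b + exp b * (c * exp (\<mu> * b))) \<le> exp (1 + \<mu>) * c"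
proof (cases "b \<ge> 1")
  case True
  have "exp b \<ge> 2" using exp_ge_add_one_self[of b] True by linarith
  moreover have "exp b * (c * exp (\<mu> * b)) \<le> exp b * (1/2)" using half by simp
  ultimately have "1 - exp b + exp b * (c * exp (\<mu> * b)) \<le> 0" by linarith
  then have "b * (1 - exp b + exp b * (c * exp (\<mu> * b))) \<le> 0" using b by (simp add: mult_nonneg_nonpos)
  moreover have "0 \<le> exp (1 + \<mu>) * c" using c by simp
  ultimately show ?thesis by linarith
next
  case False
  have "exp b \<le> exp 1" "exp (\<mu> * b) \<le> exp \<mu>" using False \<mu> by (auto simp: mult_le_cancel_left1)
  then have "b * (exp b * (c * exp (\<mu> * b))) \<le> 1 * (exp 1 * (c * exp \<mu>))"
    using b c False by (intro mult_mono) auto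
  moreover have "b * (1 - exp b) \<le> 0" using b by (simp add: mult_nonneg_nonpos)
  ultimately show ?thesis by (simp add: exp_add algebra_simps)
qed

lemma support_term_le_of_neg:
  fixes y u m t a \<mu> K v \<delta> :: real
  assumes y: "(1 - exp (- \<mu> * m)) * exp (- m) \<le> y" and u: "u < 0"
    and m: "m = ln t + a + u" and t: "t \<ge> 1" and \<mu>: "\<mu> > 0"
    and K: "K > 0" "K * exp (- a) = v" and \<delta>: "0 \<le> \<delta>" "\<delta> \<le> 1 / t"
    and half: "exp (- \<mu> * m) \<le> 1 / 2"
  shows "K * y * u - \<delta> * v * u \<le> v * (exp (1 + \<mu>) * exp (- \<mu> * a) * t powr - (1 + \<mu>))"
proof -
  define b where "b = - u"
  define c where "c = exp (- \<mu> * a) * t powr - \<mu>"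
  have v: "v > 0" and b: "b > 0" using K u by (auto simp: b_def)
  have E: "exp (- \<mu> * m) = c * exp (\<mu> * b)"
    using exp_neg_margin[of t \<mu> "\<mu> * a" "\<mu> * u"] m t by (simp add: c_def b_def algebra_simps)
  have Km: "K * exp (- m) = v * exp b / t"
    using scaled_exp_neg_margin[OF _ K(2)] m t by (simp add: b_def)
  have "K * y * u \<le> K * ((1 - exp (- \<mu> * m)) * exp (- m)) * u"
    using y u K by (intro mult_right_mono_neg mult_left_mono) auto
  also have "\<dots> = (K * exp (- m)) * (1 - exp (- \<mu> * m)) * u" by (simp add: algebra_simps)
  also have "\<dots> = - (v / t) * (b * exp b * (1 - c * exp (\<mu> * b)))"
    unfolding Km E by (simp add: b_def)
  finally have A: "K * y * u \<le> - (v / t) * (b * exp b * (1 - c * exp (\<mu> * b)))" .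
  have "\<delta> * (v * b) \<le> 1 / t * (v * b)" using \<delta>(2) v b by (intro mult_right_mono) auto
  then have B: "- (\<delta> * v * u) \<le> (v / t) * b" by (simp add: b_def algebra_simps)
  have ct: "c / t = exp (- \<mu> * a) * t powr - (1 + \<mu>)"
    using t unfolding c_def by (simp only: times_divide_eq_right[symmetric] powr_neg_div_self)
  have "b * (1 - exp b + exp b * (c * exp (\<mu> * b))) \<le> exp (1 + \<mu>) * c"
    using exp_excess_le[OF b \<mu> _ ] half E by (simp add: c_def)
  have "K * y * u - \<delta> * v * u \<le> - (v / t) * (b * exp b * (1 - c * exp (\<mu> * b))) + (v / t) * b"
    using A B by linarith
  also have "\<dots> = (v / t) * (b * (1 - exp b + exp b * (c * exp (\<mu> * b))))"
    by algebra
  also have "\<dots> \<le> (v / t) * (exp (1 + \<mu>) * c)"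
    using \<open>b * _ \<le> _\<close> v t by (intro mult_left_mono) auto
  also have "\<dots> = v * exp (1 + \<mu>) * (c / t)" by simp
  finally show ?thesis unfolding ct by (simp add: mult.assoc)
qed

lemma support_term_le:
  fixes y u m t a \<mu>p \<mu>m K v \<delta> :: real
  assumes yp: "y \<le> (1 + exp (- \<mu>p * m)) * exp (- m)" and ym: "(1 - exp (- \<mu>m * m)) * exp (- m) \<le> y"
    and m: "m = ln t + a + u" and t: "t \<ge> 1" and \<mu>: "\<mu>p > 0" "\<mu>m > 0"
    and K: "K > 0" "K * exp (- a) = v" and \<delta>: "1 / (t + 1) \<le> \<delta>" "\<delta> \<le> 1 / t"
    and half: "exp (- \<mu>m * m) \<le> 1 / 2"
  shows "K * y * u - \<delta> * v * u \<le> v * (exp (- \<mu>p * a) * t powr - (1 + \<mu>p) + t powr - 2)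
      + v * (exp (1 + \<mu>m) * exp (- \<mu>m * a) * t powr - (1 + \<mu>m))"
proof (cases "u \<ge> 0")
  case True
  have "0 \<le> v * (exp (1 + \<mu>m) * exp (- \<mu>m * a) * t powr - (1 + \<mu>m))"
    using K by auto
  then show ?thesis using support_term_le_of_nonneg[OF yp True m t \<mu>(1) K \<delta>(1)] by linarith
next
  case False
  have "0 \<le> 1 / (t + 1)" using t by simp
  then have "0 \<le> \<delta>" using \<delta>(1) by linarith
  moreover have "0 \<le> v * (exp (- \<mu>p * a) * t powr - (1 + \<mu>p) + t powr - 2)"
    using K by auto
  ultimately show ?thesis
    using support_term_le_of_neg[OF ym _ m t \<mu>(2) K _ \<delta>(2) half] False by linarith
qed

lemma potential_step_identity:
  fixes R0 R1 D0 D1 F wh :: "'a::real_inner"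
  assumes "R1 - R0 = D1 - \<delta> *\<^sub>R wh" "D1 + b *\<^sub>R (D1 - D0) = F"
  shows "(1/2) * norm R1 ^ 2 + b * (R1 \<bullet> D1) - b * (S + (R1 - R0) \<bullet> D1)
       - ((1/2) * norm R0 ^ 2 + b * (R0 \<bullet> D0) - b * S)
       = (F - \<delta> *\<^sub>R wh) \<bullet> R0 + (1/2) * norm (R1 - R0) ^ 2"
proof -
  have "F - \<delta> *\<^sub>R wh = (D1 - \<delta> *\<^sub>R wh) + b *\<^sub>R (D1 - D0)"
    using assms(2) by (simp add: algebra_simps)
  then have e: "F - \<delta> *\<^sub>R wh = (R1 - R0) + b *\<^sub>R (D1 - D0)" by (simp only: assms(1))
  show ?thesis unfolding e power2_norm_eq_inner
    by (simp add: inner_commute[of R0 R1] inner_commute[of D1 R0] inner_commute[of D0 R0]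
        inner_commute[of D1 R1] algebra_simps)
qed

lemma two_mult_inner_le:
  fixes a b :: "'a::real_inner"
  assumes "0 \<le> s" "s \<le> 1"
  shows "2 * s * (a \<bullet> b) \<le> norm a ^ 2 + s * norm b ^ 2"
proof -
  have "0 \<le> norm (a - s *\<^sub>R b) ^ 2" by simp
  also have "\<dots> = norm a ^ 2 - 2 * s * (a \<bullet> b) + s^2 * norm b ^ 2"
    unfolding power2_norm_eq_inner
    by (simp add: inner_commute[of b a] algebra_simps power2_eq_square)
  also have "s^2 * norm b ^ 2 \<le> s * norm b ^ 2"
    using assms by (intro mult_right_mono) (auto simp: power2_eq_square mult_left_le)
  finally show ?thesis by simp
qed

text \<open>The scalar core of the energy estimate, with \<open>a = \<eta> (1 - \<beta>)\<close>, \<open>b = \<beta>\<close>, \<open>P = \<parallel>D\<parallel>\<^sup>2\<close>,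
  \<open>Q = \<parallel>q\<parallel>\<^sup>2\<close>, \<open>I = D \<bullet> q\<close> and \<open>Gs\<close> the first order term of the loss along \<open>s q\<close>.\<close>
lemma momentum_descent_arith:
  fixes a b c g m s I P Q Gs :: real
  assumes a: "a > 0" and Gs: "a * Gs = s * (b * I - Q)" and c: "a * c = b / 2" and g: "a * g = (1 - b) - a * m / 2"
    and I: "2 * s * I \<le> P + s * Q" and sQ: "s^2 * Q \<le> s * Q" and b: "b \<ge> 0" and m: "m \<ge> 0"
  shows "Gs + m / 2 * (s^2 * Q) + c * s * Q \<le> c * P - s * g * Q"
proof -
  have "a * ((Gs + m / 2 * (s^2 * Q) + c * s * Q) - (c * P - s * g * Q))
      = a * Gs + a * m / 2 * (s^2 * Q) + (a * c) * (s * Q) - (a * c) * P + s * (a * g) * Q"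
    by (simp add: algebra_simps)
  also have "\<dots> = b / 2 * (2 * s * I - P - s * Q) + a * m / 2 * (s^2 * Q - s * Q)"
    unfolding Gs c g by (simp add: algebra_simps)
  also have "\<dots> \<le> 0"
    using I sQ a b m by (intro add_nonpos_nonpos mult_nonneg_nonpos) auto
  finally show ?thesis using a by (simp add: mult_le_0_iff)
qed

lemma first_exit_point:
  fixes p q :: "'a::real_inner" and X :: "'n::finite \<Rightarrow> 'a"
  assumes inside: "\<And>j. c \<le> p \<bullet> X j" and outside: "(p + q) \<bullet> X i < c"
  obtains s i0 where "0 \<le> s" "s < 1" "(p + s *\<^sub>R q) \<bullet> X i0 = c" "q \<bullet> X i0 < 0"
    "\<And>j. c \<le> (p + s *\<^sub>R q) \<bullet> X j"
proof -
  define J where "J = {j. (p + q) \<bullet> X j < c}"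
  define exit where "exit j = (c - p \<bullet> X j) / (q \<bullet> X j)" for j
  have neg: "q \<bullet> X j < 0" if "j \<in> J" for j
    using that inside[of j] by (simp add: J_def inner_add_left)
  have "i \<in> J" using outside by (simp add: J_def)
  then obtain i0 where i0: "i0 \<in> J" "exit i0 = Min (exit ` J)"
    using Min_in[of "exit ` J"] by (metis empty_iff finite finite_imageI image_is_empty imageE)
  define s where "s = exit i0"
  have s: "0 \<le> s" "s < 1"
    using neg[OF i0(1)] inside[of i0] i0(1)
    by (auto simp: s_def exit_def J_def inner_add_left divide_nonpos_neg divide_less_eq)
  have "c \<le> (p + s *\<^sub>R q) \<bullet> X j" for j
  proof (cases "j \<in> J")
    case True
    have "exit j * (q \<bullet> X j) \<le> s * (q \<bullet> X j)"
      using i0 True neg[OF True] by (simp add: s_def mult_right_mono_neg)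
    then show ?thesis using neg[OF True] by (simp add: exit_def inner_add_left)
  next
    case False
    then have "(1 - s) * c + s * c \<le> (1 - s) * (p \<bullet> X j) + s * ((p + q) \<bullet> X j)"
      using s inside[of j] by (intro add_mono mult_left_mono) (auto simp: J_def)
    then show ?thesis by (simp add: algebra_simps)
  qed
  moreover have "(p + s *\<^sub>R q) \<bullet> X i0 = c"
    using neg[OF i0(1)] by (simp add: s_def exit_def inner_add_left)
  ultimately show ?thesis using that s neg[OF i0(1)] by blast
qed

lemma sum_inner_sq_le_sigma_max:
  fixes X :: "'n::finite \<Rightarrow> real^'d"
  shows "(\<Sum>i\<in>UNIV. (X i \<bullet> d)^2) \<le> sigma_max X ^ 2 * norm d ^ 2"
proof -
  define f where "f = (\<lambda>c::real^'n. \<Sum>i\<in>UNIV. (c $ i) *\<^sub>R X i)"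
  have "linear f"
    unfolding f_def by (rule linearI) (auto simp: sum.distrib scaleR_add_left scaleR_sum_right)
  then have bl: "bounded_linear f" using linear_conv_bounded_linear by blast
  define c where "c = (\<chi> i. X i \<bullet> d)"
  have nc: "norm c ^ 2 = (\<Sum>i\<in>UNIV. (X i \<bullet> d)^2)"
    unfolding power2_norm_eq_inner inner_vec_def[of c c] by (simp add: c_def power2_eq_square)
  have "norm c ^ 2 = f c \<bullet> d"
    unfolding nc by (simp add: f_def c_def inner_sum_left power2_eq_square)
  also have "\<dots> \<le> norm (f c) * norm d" by (rule norm_cauchy_schwarz)
  also have "\<dots> \<le> sigma_max X * norm c * norm d"
    using onorm[OF bl, of c] unfolding sigma_max_def f_def[symmetric] by (intro mult_right_mono) auto
  finally have "norm c \<le> sigma_max X * norm d"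
    by (cases "norm c = 0") (auto simp: power2_eq_square mult.assoc sigma_max_def f_def[symmetric] onorm_pos_le[OF bl])
  then have "norm c ^ 2 \<le> (sigma_max X * norm d)^2" by (intro power_mono) auto
  then show ?thesis using nc by (simp add: power_mult_distrib)
qed

section \<open>The max-margin separator\<close>

lemma max_margin_unique:
  fixes X :: "'n::finite \<Rightarrow> real^'d"
  assumes "\<exists>w. \<forall>i. w \<bullet> X i > 0"
  shows "\<exists>!w. (\<forall>i. w \<bullet> X i \<ge> 1) \<and> (\<forall>u. (\<forall>i. u \<bullet> X i \<ge> 1) \<longrightarrow> norm w ^ 2 \<le> norm u ^ 2)"
proof -
  define K where "K = {w. \<forall>i. w \<bullet> X i \<ge> 1}"
  have "closed {w. 1 \<le> w \<bullet> X i}" for i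
    using closed_halfspace_ge[where a = "X i" and b = 1] by (simp add: inner_commute)
  then have "closed K" unfolding K_def by (intro closed_Collect_all)
  obtain u where u: "\<forall>i. u \<bullet> X i > 0" using assms by blast
  define \<gamma> where "\<gamma> = Min (range (\<lambda>i. u \<bullet> X i))"
  have "\<gamma> > 0" unfolding \<gamma>_def using u by (subst Min_gr_iff) auto
  moreover have "\<gamma> \<le> u \<bullet> X i" for i unfolding \<gamma>_def by (rule Min_le) auto
  ultimately have "(1 / \<gamma>) *\<^sub>R u \<in> K" by (auto simp: K_def field_simps)
  then obtain w where w: "w \<in> K" "\<And>y. y \<in> K \<Longrightarrow> dist 0 w \<le> dist 0 y"
    using distance_attains_inf[OF \<open>closed K\<close>, of 0] by blast
  have wmin: "norm w ^ 2 \<le> norm y ^ 2" if "y \<in> K" for y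
    using w(2)[OF that] by (auto intro: power_mono)
  show ?thesis
  proof (rule ex1I[of _ w])
    show "(\<forall>i. w \<bullet> X i \<ge> 1) \<and> (\<forall>u. (\<forall>i. u \<bullet> X i \<ge> 1) \<longrightarrow> norm w ^ 2 \<le> norm u ^ 2)"
      using w(1) wmin by (auto simp: K_def)
    fix z assume z: "(\<forall>i. z \<bullet> X i \<ge> 1) \<and> (\<forall>u. (\<forall>i. u \<bullet> X i \<ge> 1) \<longrightarrow> norm z ^ 2 \<le> norm u ^ 2)"
    then have "z \<in> K" by (simp add: K_def)
    then have eq: "norm z ^ 2 = norm w ^ 2" using z wmin w(1) by (auto simp: K_def intro: order_antisym)
    define mid where "mid = (1/2) *\<^sub>R (z + w)"
    have "mid \<in> K" unfolding K_def
    proof (intro CollectI allI)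
      fix i
      have "1 \<le> z \<bullet> X i" "1 \<le> w \<bullet> X i" using \<open>z \<in> K\<close> w(1) by (auto simp: K_def)
      then show "1 \<le> mid \<bullet> X i" by (simp add: mid_def inner_add_left)
    qed
    then have "norm z ^ 2 \<le> norm mid ^ 2" using z unfolding K_def by blast
    moreover have "norm mid ^ 2 = (norm z ^ 2 + norm w ^ 2) / 2 - norm (z - w) ^ 2 / 4"
      unfolding mid_def power2_norm_eq_inner
      by (simp add: inner_add_left inner_add_right inner_diff_left inner_diff_right inner_commute[of w z] field_simps)
    ultimately have "norm (z - w) ^ 2 \<le> 0" using eq by simp
    then show "z = w" by simp
  qed
qed

lemma margin_gt_one_if_not_support:
  fixes X :: "'n::finite \<Rightarrow> real^'d"
  assumes "\<exists>w. \<forall>i. w \<bullet> X i > 0" "i \<notin> support_set X"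
  shows "X i \<bullet> max_margin X > 1"
proof -
  have "max_margin X \<bullet> X i \<ge> 1"
    using theI'[OF max_margin_unique[OF assms(1)]] unfolding max_margin_def by blast
  then show ?thesis using assms(2) by (simp add: support_set_def inner_commute)
qed

section \<open>The loss function\<close>

locale loss =
  fixes l l' :: "real \<Rightarrow> real"
  assumes deriv: "\<And>x. (l has_real_derivative l' x) (at x)"
    and deriv_neg: "\<And>x. l' x < 0"
    and tendsto_zero: "(l \<longlongrightarrow> 0) at_top"
    and Limsup_deriv_at_bot: "Limsup at_bot (\<lambda>x. ereal (l' x)) < 0"
    and deriv_lipschitz: "\<And>s0. \<exists>C. \<forall>x y. x \<ge> s0 \<longrightarrow> y \<ge> s0 \<longrightarrow> \<bar>l' x - l' y\<bar> \<le> C * \<bar>x - y\<bar>"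
begin

lemma less_if_greater: "x < y \<Longrightarrow> l y < l x"
  using DERIV_neg_imp_decreasing[of x y l] deriv deriv_neg by blast

lemma le_iff: "l x \<le> l y \<longleftrightarrow> y \<le> x"
  using less_if_greater[of x y] less_if_greater[of y x] by (cases x y rule: linorder_cases) auto

lemma pos: "l x > 0"
proof -
  have "0 \<le> l (x + 1)"
  proof (rule tendsto_le[OF trivial_limit_at_top_linorder tendsto_const tendsto_zero])
    show "\<forall>\<^sub>F y in at_top. l y \<le> l (x + 1)"
      unfolding eventually_at_top_linorder by (rule exI[of _ "x + 1"]) (auto simp: le_iff)
  qed
  then show ?thesis using less_if_greater[of x "x + 1"] by simp
qed

lemma deriv_less_at_bot: "\<exists>c K. c < 0 \<and> (\<forall>x\<le>K. l' x < c)"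
proof -
  obtain z where z: "Limsup at_bot (\<lambda>x. ereal (l' x)) < z" "z < 0"
    using Limsup_deriv_at_bot dense by blast
  then obtain c where c: "z = ereal c" by (cases z) auto
  have "\<forall>\<^sub>F x in at_bot. ereal (l' x) < z" using Limsup_lessD[OF z(1)] .
  then obtain K where "\<forall>x\<le>K. ereal (l' x) < z"
    unfolding eventually_at_bot_linorder by blast
  then show ?thesis using z c by (intro exI[of _ c] exI[of _ K]) auto
qed

lemma surj_pos: assumes "y > 0" shows "\<exists>x. l x = y"
proof -
  obtain c K where cK: "c < 0" "\<forall>x\<le>K. l' x < c" using deriv_less_at_bot by blast
  define a where "a = K + y / c"
  have "a < K" using cK assms by (simp add: a_def divide_pos_neg)
  then obtain z where z: "a < z" "z < K" "l K - l a = (K - a) * l' z"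
    using MVT2[of a K l l'] deriv by blast
  have "l' z < c" using cK z(2) by auto
  then have "(K - a) * l' z \<le> (K - a) * c"
    using z by (intro mult_left_mono) auto
  also have "(K - a) * c = - y" using cK by (simp add: a_def field_simps)
  finally have la: "y \<le> l a" using z pos[of K] by linarith
  obtain b0 where "\<forall>x\<ge>b0. l x < y"
    using order_tendstoD(2)[OF tendsto_zero assms] unfolding eventually_at_top_linorder by blast
  then have "l (max a b0) \<le> y" by (simp add: less_imp_le)
  moreover have "continuous_on {a..max a b0} l"
    by (meson deriv DERIV_isCont continuous_at_imp_continuous_on)
  ultimately show ?thesis using IVT2'[of l "max a b0" y a] la by auto
qed

lemma inv_eq: "y > 0 \<Longrightarrow> l (inv l y) = y"
  using surj_pos by (metis f_inv_into_f rangeI)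

lemma deriv_le_neg_below: "\<exists>e>0. \<forall>x\<le>M. l' x \<le> - e"
proof -
  obtain c K where cK: "c < 0" "\<forall>x\<le>K. l' x < c" using deriv_less_at_bot by blast
  obtain C where C: "\<forall>x y. x \<ge> K \<longrightarrow> y \<ge> K \<longrightarrow> \<bar>l' x - l' y\<bar> \<le> C * \<bar>x - y\<bar>"
    using deriv_lipschitz by blast
  have "(max C 0)-lipschitz_on {K..M} l'"
  proof (rule lipschitz_onI)
    fix x y assume "x \<in> {K..M}" "y \<in> {K..M}"
    then have "\<bar>l' x - l' y\<bar> \<le> C * \<bar>x - y\<bar>" using C by auto
    also have "\<dots> \<le> max C 0 * \<bar>x - y\<bar>" by (intro mult_right_mono) auto
    finally show "dist (l' x) (l' y) \<le> max C 0 * dist x y" by (simp add: dist_real_def)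
  qed simp
  then have "continuous_on {K..M} l'" by (rule lipschitz_on_continuous_on)
  then obtain z where z: "K \<le> M \<Longrightarrow> z \<in> {K..M} \<and> (\<forall>y\<in>{K..M}. l' y \<le> l' z)"
    using continuous_attains_sup[OF compact_Icc] by (metis atLeastAtMost_iff empty_iff order_refl)
  show ?thesis
  proof (intro exI[of _ "min (- c) (- l' z)"] conjI allI impI)
    show "0 < min (- c) (- l' z)" using cK deriv_neg[of z] by simp
    fix x assume "x \<le> M"
    show "l' x \<le> - min (- c) (- l' z)"
    proof (cases "x \<le> K")
      case True
      then show ?thesis using cK by (auto simp: min_def)
    next
      case False
      then have "l' x \<le> l' z" using z \<open>x \<le> M\<close> by auto
      then show ?thesis by (auto simp: min_def)
    qed
  qed
qed

lemma filterlim_at_top_if_deriv_tendsto_zero: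
  fixes a :: "nat \<Rightarrow> real"
  assumes "(\<lambda>t. l' (a t)) \<longlonglongrightarrow> 0"
  shows "filterlim a at_top sequentially"
proof (subst filterlim_at_top, intro allI)
  fix M
  obtain e where e: "e > 0" "\<forall>x\<le>M. l' x \<le> - e" using deriv_le_neg_below by blast
  have "\<forall>\<^sub>F t in sequentially. dist (l' (a t)) 0 < e" using assms e(1) tendstoD by blast
  then show "\<forall>\<^sub>F t in sequentially. M \<le> a t"
  proof (rule eventually_mono)
    fix t assume "dist (l' (a t)) 0 < e"
    then show "M \<le> a t" using e(2)[rule_format, of "a t"] by (force simp: dist_real_def)
  qed
qed

lemma lip_H_set_nonempty:
  "{C. C \<ge> 0 \<and> (\<forall>x y. x \<ge> s0 \<longrightarrow> y \<ge> s0 \<longrightarrow> \<bar>l' x - l' y\<bar> \<le> C * \<bar>x - y\<bar>)} \<noteq> {}"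
proof -
  obtain C where C: "\<forall>x y. x \<ge> s0 \<longrightarrow> y \<ge> s0 \<longrightarrow> \<bar>l' x - l' y\<bar> \<le> C * \<bar>x - y\<bar>"
    using deriv_lipschitz by blast
  then have "\<forall>x y. x \<ge> s0 \<longrightarrow> y \<ge> s0 \<longrightarrow> \<bar>l' x - l' y\<bar> \<le> max C 0 * \<bar>x - y\<bar>"
    by (meson abs_ge_zero max.cobounded1 mult_right_mono order_trans)
  then show ?thesis by (intro ex_in_conv[THEN iffD1] exI[of _ "max C 0"]) auto
qed

lemma lip_H_nonneg: "lip_H l' s0 \<ge> 0"
  unfolding lip_H_def using lip_H_set_nonempty[of s0] by (intro cInf_greatest) auto

lemma lip_H_lipschitz:
  assumes "x \<ge> s0" "y \<ge> s0" shows "\<bar>l' x - l' y\<bar> \<le> lip_H l' s0 * \<bar>x - y\<bar>"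
proof (cases "x = y")
  case False
  then have "\<bar>l' x - l' y\<bar> / \<bar>x - y\<bar> \<le> lip_H l' s0"
    unfolding lip_H_def using lip_H_set_nonempty[of s0] assms
    by (intro cInf_greatest) (auto simp: divide_le_eq)
  then show ?thesis using False by (simp add: divide_le_eq mult.commute)
qed simp

lemma le_tangent_plus_quadratic:
  assumes "a \<ge> s0" "b \<ge> s0"
  shows "l b \<le> l a + l' a * (b - a) + lip_H l' s0 / 2 * (b - a)^2"
proof -
  define H where "H = lip_H l' s0"
  define \<phi> where "\<phi> z = l z - l a - l' a * (z - a) - H / 2 * (z - a)^2" for z
  have der: "DERIV \<phi> z :> l' z - l' a - H * (z - a)" for z
    unfolding \<phi>_def by (auto intro!: derivative_eq_intros deriv simp: power2_eq_square algebra_simps)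
  have lip: "\<bar>l' z - l' a\<bar> \<le> H * \<bar>z - a\<bar>" if "z \<ge> s0" for z
    using lip_H_lipschitz[OF that assms(1)] by (simp add: H_def)
  have "\<phi> b \<le> \<phi> a"
  proof (cases "a \<le> b")
    case True
    show ?thesis
    proof (rule DERIV_nonpos_imp_nonincreasing[OF True])
      fix z assume "a \<le> z" "z \<le> b"
      then show "\<exists>y. DERIV \<phi> z :> y \<and> y \<le> 0"
        using der[of z] lip[of z] assms by (intro exI[of _ "l' z - l' a - H * (z - a)"]) auto
    qed
  next
    case False
    show ?thesis
    proof (rule DERIV_nonneg_imp_nondecreasing[of b a \<phi>])
      show "b \<le> a" using False by simp
      fix z assume "b \<le> z" "z \<le> a"
      then show "\<exists>y. DERIV \<phi> z :> y \<and> y \<ge> 0"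
        using der[of z] lip[of z] assms
        by (intro exI[of _ "l' z - l' a - H * (z - a)"]) (auto simp: abs_le_iff algebra_simps)
    qed
  qed
  then show ?thesis by (simp add: \<phi>_def H_def)
qed

end

section \<open>Energy decrease of the heavy-ball method\<close>

locale gdm = loss l l'
  for l l' :: "real \<Rightarrow> real" +
  fixes X :: "'n::finite \<Rightarrow> real^'d"
    and \<beta> \<eta> :: real
    and w0 :: "real^'d"
  assumes beta: "0 \<le> \<beta>" "\<beta> < 1"
    and eta_pos: "0 < \<eta>"
    and eta_bound: "\<eta> < 2 * real CARD('n) /
          (sigma_max X ^ 2 * lip_H l' (inv l (real CARD('n) * emp_loss l X (gdm_w l' X \<beta> \<eta> w0 1))))"
begin

abbreviation "Lf \<equiv> emp_loss l X"
abbreviation "G \<equiv> emp_grad l' X"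
abbreviation "W \<equiv> gdm_w l' X \<beta> \<eta> w0"
abbreviation "\<alpha> \<equiv> \<eta> * (1 - \<beta>)"

definition "mom t = snd (gdm_state l' X \<beta> \<eta> w0 t)"
definition "dw t = W (Suc t) - W t"
definition "s0 = inv l (real CARD('n) * Lf w0)"
definition "smooth = sigma_max X ^ 2 * lip_H l' s0 / real CARD('n)"
definition "mom_weight = \<beta> / (2 * \<alpha>)"
definition "gain = 1 / \<eta> - smooth / 2"

definition "energy t = Lf (W (Suc t)) + mom_weight * norm (dw t) ^ 2"

lemma W_Suc: "W (Suc t) = W t - \<eta> *\<^sub>R mom t"
  by (simp add: gdm_w_def mom_def split_beta Let_def)

lemma mom_Suc: "mom (Suc t) = \<beta> *\<^sub>R mom t + (1 - \<beta>) *\<^sub>R G (W (Suc t))"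
  by (simp add: mom_def W_Suc[symmetric]) (simp add: gdm_w_def split_beta Let_def)

lemma W_one: "W 1 = w0"
  using W_Suc[of 0] by (simp add: gdm_w_def mom_def)

lemma dw_zero: "dw 0 = 0"
  using W_one by (simp add: dw_def gdm_w_def)

lemma dw_Suc: "dw (Suc t) = \<beta> *\<^sub>R dw t - \<alpha> *\<^sub>R G (W (Suc t))"
  by (simp add: dw_def W_Suc mom_Suc algebra_simps)

lemma alpha_pos: "\<alpha> > 0" using beta eta_pos by simp

lemma mom_weight_nonneg: "mom_weight \<ge> 0" using alpha_pos beta by (simp add: mom_weight_def)

lemma smooth_pos: "smooth > 0" and gain_pos: "gain > 0"
proof -
  have eb: "\<eta> < 2 * real CARD('n) / (sigma_max X ^ 2 * lip_H l' s0)"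
    using eta_bound unfolding W_one by (simp add: s0_def)
  have "sigma_max X ^ 2 * lip_H l' s0 \<ge> 0" using lip_H_nonneg[of s0] by simp
  \<comment> \<open>were it \<open>0\<close>, the bound would read \<open>\<eta> < 0\<close> because \<open>x / 0 = 0\<close>\<close>
  moreover have "sigma_max X ^ 2 * lip_H l' s0 \<noteq> 0" using eb eta_pos by auto
  ultimately have p: "sigma_max X ^ 2 * lip_H l' s0 > 0" by linarith
  then show "smooth > 0" by (simp add: smooth_def)
  from eb p have "\<eta> * (sigma_max X ^ 2 * lip_H l' s0) < 2 * real CARD('n)" by (simp add: pos_less_divide_eq)
  then have "\<eta> * smooth < 2" by (simp add: smooth_def pos_divide_less_eq mult.assoc[symmetric])
  then show "gain > 0" using eta_pos by (simp add: gain_def field_simps)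
qed

lemma Lf_sum: "real CARD('n) * Lf w = (\<Sum>i\<in>UNIV. l (w \<bullet> X i))"
  by (simp add: emp_loss_def)

lemma Lf_pos: "Lf w > 0"
  unfolding emp_loss_def using pos by (intro mult_pos_pos sum_pos) auto

lemma G_inner: "G w \<bullet> u = (1 / real CARD('n)) * (\<Sum>i\<in>UNIV. l' (w \<bullet> X i) * (X i \<bullet> u))"
  by (simp add: emp_grad_def inner_sum_left)

lemma l_s0: "l s0 = real CARD('n) * Lf w0"
  unfolding s0_def using Lf_pos[of w0] by (intro inv_eq) simp

lemma margin_ge_s0_if_loss_le: assumes "Lf w \<le> Lf w0" shows "s0 \<le> w \<bullet> X i"
proof -
  have "l (w \<bullet> X i) \<le> (\<Sum>j\<in>UNIV. l (w \<bullet> X j))"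
    using pos by (intro member_le_sum) (auto intro: less_imp_le)
  also have "\<dots> = real CARD('n) * Lf w" by (simp add: Lf_sum)
  also have "\<dots> \<le> l s0" using assms by (simp add: l_s0)
  finally show ?thesis by (simp add: le_iff)
qed

lemma loss_descent:
  assumes "\<And>i. s0 \<le> w \<bullet> X i" "\<And>i. s0 \<le> (w + d) \<bullet> X i"
  shows "Lf (w + d) \<le> Lf w + G w \<bullet> d + smooth / 2 * norm d ^ 2"
proof -
  define H where "H = lip_H l' s0"
  have "real CARD('n) * Lf (w + d) \<le> (\<Sum>i\<in>UNIV. l (w \<bullet> X i) + l' (w \<bullet> X i) * (X i \<bullet> d) + H / 2 * (X i \<bullet> d)^2)"
    unfolding Lf_sum
  proof (rule sum_mono)
    fix i
    have "(w + d) \<bullet> X i - w \<bullet> X i = X i \<bullet> d" by (simp add: inner_add_left inner_commute[of d "X i"])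
    then show "l ((w + d) \<bullet> X i) \<le> l (w \<bullet> X i) + l' (w \<bullet> X i) * (X i \<bullet> d) + H / 2 * (X i \<bullet> d)^2"
      using le_tangent_plus_quadratic[OF assms(1)[of i] assms(2)[of i]] by (simp add: H_def)
  qed
  also have "\<dots> = real CARD('n) * Lf w + real CARD('n) * (G w \<bullet> d) + H / 2 * (\<Sum>i\<in>UNIV. (X i \<bullet> d)^2)"
    by (simp add: sum.distrib Lf_sum G_inner sum_distrib_left)
  also have "\<dots> \<le> real CARD('n) * Lf w + real CARD('n) * (G w \<bullet> d) + H / 2 * (sigma_max X ^ 2 * norm d ^ 2)"
    using sum_inner_sq_le_sigma_max[of X d] lip_H_nonneg[of s0]
    unfolding H_def by (intro add_left_mono mult_left_mono) auto
  also have "\<dots> = real CARD('n) * (Lf w + G w \<bullet> d + smooth / 2 * norm d ^ 2)"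
    by (simp add: smooth_def H_def distrib_left)
  finally show ?thesis by simp
qed

lemma partial_step_descent:
  assumes p: "\<And>i. s0 \<le> p \<bullet> X i" and ps: "\<And>i. s0 \<le> (p + s *\<^sub>R q) \<bullet> X i"
    and s: "0 \<le> s" "s \<le> 1" and q: "q = \<beta> *\<^sub>R D' - \<alpha> *\<^sub>R G p"
  shows "Lf (p + s *\<^sub>R q) + mom_weight * s * norm q ^ 2 \<le> Lf p + mom_weight * norm D' ^ 2 - s * gain * norm q ^ 2"
proof -
  define P where "P = norm D' ^ 2"
  define Q where "Q = norm q ^ 2"
  define I where "I = D' \<bullet> q"
  define Gs where "Gs = G p \<bullet> (s *\<^sub>R q)"
  have "\<alpha> *\<^sub>R G p = \<beta> *\<^sub>R D' - q" using q by simp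
  then have Gs: "\<alpha> * Gs = s * (\<beta> * I - Q)"
    unfolding Gs_def I_def Q_def power2_norm_eq_inner
    by (metis inner_diff_left inner_scaleR_left inner_scaleR_right)
  have I: "2 * s * I \<le> P + s * Q"
    unfolding P_def Q_def I_def by (rule two_mult_inner_le[OF s])
  have sQ: "s^2 * Q \<le> s * Q"
    using s by (intro mult_right_mono) (auto simp: Q_def power2_eq_square mult_left_le)
  have "\<alpha> * mom_weight = \<beta> / 2" "\<alpha> * gain = (1 - \<beta>) - \<alpha> * smooth / 2"
    using eta_pos beta by (auto simp: gain_def mom_weight_def field_simps)
  from momentum_descent_arith[OF alpha_pos Gs this I sQ beta(1)] smooth_pos
  have "Gs + smooth / 2 * (s^2 * Q) + mom_weight * s * Q \<le> mom_weight * P - s * gain * Q" by simp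
  moreover have "Lf (p + s *\<^sub>R q) \<le> Lf p + Gs + smooth / 2 * (s^2 * Q)"
    using loss_descent[OF p ps] by (simp add: Gs_def Q_def power_mult_distrib)
  ultimately show ?thesis by (simp add: P_def Q_def)
qed

lemma Lf_split: "real CARD('n) * Lf w = l (w \<bullet> X i) + (\<Sum>j\<in>UNIV - {i}. l (w \<bullet> X j))"
  unfolding Lf_sum by (simp add: sum.remove)

lemma grad_inner_nonpos_if_single:
  assumes "UNIV = {i}" shows "G w \<bullet> X i \<le> 0"
proof -
  have "G w \<bullet> X i = (1 / real CARD('n)) * (l' (w \<bullet> X i) * (X i \<bullet> X i))"
    unfolding G_inner by (subst assms) simp
  also have "\<dots> \<le> 0"
    using deriv_neg[of "w \<bullet> X i"] by (intro mult_nonneg_nonpos mult_nonpos_nonneg) auto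
  finally show ?thesis .
qed

text \<open>At the first exit point \<open>p + s q\<close> one margin equals \<open>s0\<close>, so the loss there is at least
  \<open>Lf w0\<close>; the descent estimate then forces \<open>s = 0\<close> and a single data point, for which the
  step \<open>q = - \<alpha> G p\<close> points back into the region.\<close>
lemma step_stays_in_region:
  assumes p: "\<And>i. s0 \<le> p \<bullet> X i" and E: "Lf p + mom_weight * norm D' ^ 2 \<le> Lf w0"
    and q: "q = \<beta> *\<^sub>R D' - \<alpha> *\<^sub>R G p"
  shows "s0 \<le> (p + q) \<bullet> X i"
proof (rule ccontr)
  assume "\<not> s0 \<le> (p + q) \<bullet> X i"
  then obtain s i0 where s: "0 \<le> s" "s < 1" and i0: "(p + s *\<^sub>R q) \<bullet> X i0 = s0" "q \<bullet> X i0 < 0"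
    and ps: "\<And>j. s0 \<le> (p + s *\<^sub>R q) \<bullet> X j"
    using first_exit_point[of s0 p X q i] p by (metis not_le)
  define N where "N = real CARD('n)"
  define rest where "rest w = (\<Sum>j\<in>UNIV - {i0}. l (w \<bullet> X j))" for w
  have rest_nonneg: "rest w \<ge> 0" for w unfolding rest_def using pos by (intro sum_nonneg) (auto intro: less_imp_le)
  have N_Lf: "N * Lf w = N * Lf w0 + rest w" if "w \<bullet> X i0 = s0" for w
    using Lf_split[of w i0] that by (simp add: N_def rest_def l_s0)
  have "Lf (p + s *\<^sub>R q) + mom_weight * s * norm q ^ 2 \<le> Lf w0 - s * gain * norm q ^ 2"
    using partial_step_descent[OF p ps s(1) _ q] s E by linarith
  then have "N * (Lf (p + s *\<^sub>R q) + mom_weight * s * norm q ^ 2) \<le> N * (Lf w0 - s * gain * norm q ^ 2)"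
    by (simp add: N_def mult_left_mono)
  then have "N * Lf (p + s *\<^sub>R q) + N * (mom_weight * s * norm q ^ 2) \<le> N * Lf w0 - N * (s * gain * norm q ^ 2)"
    by (simp only: distrib_left right_diff_distrib)
  moreover have "0 \<le> N * (mom_weight * s * norm q ^ 2)" "0 \<le> N * (s * gain * norm q ^ 2)"
    using mom_weight_nonneg s gain_pos by (auto simp: N_def)
  ultimately have "rest (p + s *\<^sub>R q) = 0" "N * (s * gain * norm q ^ 2) = 0"
    using N_Lf[OF i0(1)] rest_nonneg[of "p + s *\<^sub>R q"] by linarith+
  moreover have "q \<noteq> 0" using i0(2) by auto
  ultimately have rest0: "rest (p + s *\<^sub>R q) = 0" and "s = 0" using gain_pos by (auto simp: N_def)
  have single: "UNIV = {i0}"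
  proof (rule ccontr)
    assume "UNIV \<noteq> {i0}"
    then have "rest (p + s *\<^sub>R q) > 0" unfolding rest_def using pos by (intro sum_pos) auto
    then show False using rest0 by simp
  qed
  have "N * Lf p = N * Lf w0 + rest p" using N_Lf i0(1) \<open>s = 0\<close> by simp
  then have "N * Lf w0 \<le> N * Lf p" using rest_nonneg[of p] by linarith
  then have "Lf w0 \<le> Lf p" by (simp add: N_def)
  moreover have "0 \<le> mom_weight * norm D' ^ 2" using mom_weight_nonneg by simp
  ultimately have "mom_weight * norm D' ^ 2 = 0" using E by linarith
  then have "\<beta> *\<^sub>R D' = 0" using alpha_pos by (auto simp: mom_weight_def)
  then have "q \<bullet> X i0 = - \<alpha> * (G p \<bullet> X i0)" using q by (auto simp: inner_diff_left)
  also have "\<dots> \<ge> 0" using grad_inner_nonpos_if_single[OF single, of p] alpha_pos by (simp add: mult_nonneg_nonpos)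
  finally show False using i0(2) by simp
qed

lemma energy_Suc_le:
  assumes "energy t \<le> Lf w0"
  shows "energy (Suc t) \<le> energy t - gain * norm (dw (Suc t)) ^ 2"
proof -
  define p where "p = W (Suc t)"
  define q where "q = dw (Suc t)"
  have q: "q = \<beta> *\<^sub>R dw t - \<alpha> *\<^sub>R G p" by (simp add: q_def p_def dw_Suc)
  have E: "Lf p + mom_weight * norm (dw t) ^ 2 \<le> Lf w0" using assms by (simp add: energy_def p_def)
  then have "Lf p \<le> Lf w0" using mom_weight_nonneg by (meson le_add_same_cancel1 order_trans zero_le_mult_iff zero_le_power2)
  then have p: "\<And>i. s0 \<le> p \<bullet> X i" by (rule margin_ge_s0_if_loss_le)
  have "Lf (p + 1 *\<^sub>R q) + mom_weight * 1 * norm q ^ 2 \<le> Lf p + mom_weight * norm (dw t) ^ 2 - 1 * gain * norm q ^ 2"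
    using step_stays_in_region[OF p E q] by (intro partial_step_descent[OF p _ _ _ q]) auto
  moreover have "W (Suc (Suc t)) = p + q" by (simp add: p_def q_def dw_def)
  ultimately show ?thesis by (simp add: energy_def p_def q_def)
qed

lemma energy_plus_sum_le: "energy t + gain * (\<Sum>k<t. norm (dw (Suc k)) ^ 2) \<le> Lf w0"
proof (induction t)
  case 0
  then show ?case using W_one by (simp add: energy_def dw_zero)
next
  case (Suc t)
  have "0 \<le> gain * (\<Sum>k<t. norm (dw (Suc k)) ^ 2)" using gain_pos by (simp add: sum_nonneg)
  then have "energy t \<le> Lf w0" using Suc by linarith
  from energy_Suc_le[OF this] Suc show ?case by (simp add: algebra_simps)
qed

lemma energy_nonneg: "energy t \<ge> 0"
  unfolding energy_def using Lf_pos[of "W (Suc t)"] mom_weight_nonneg by (simp add: add_pos_nonneg)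

lemma sum_dw_sq_le: "(\<Sum>k<n. norm (dw k) ^ 2) \<le> Lf w0 / gain"
proof (cases n)
  case 0
  then show ?thesis using gain_pos Lf_pos[of w0] by simp
next
  case (Suc m)
  have "gain * (\<Sum>k<m. norm (dw (Suc k)) ^ 2) \<le> Lf w0"
    using energy_plus_sum_le[of m] energy_nonneg[of m] by linarith
  then show ?thesis
    using gain_pos unfolding Suc sum.lessThan_Suc_shift by (simp add: dw_zero pos_le_divide_eq mult.commute)
qed

lemma summable_dw_sq: "summable (\<lambda>k. norm (dw k) ^ 2)"
  by (rule summableI_nonneg_bounded[OF _ sum_dw_sq_le]) simp

lemma grad_tendsto_zero: "(\<lambda>t. G (W t)) \<longlonglongrightarrow> 0"
proof -
  have "(\<lambda>k. norm (dw k)) \<longlonglongrightarrow> 0"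
    using tendsto_real_sqrt[OF summable_LIMSEQ_zero[OF summable_dw_sq]] by simp
  then have dw0: "dw \<longlonglongrightarrow> 0" using tendsto_norm_zero_iff by blast
  have "G (W (Suc t)) = (1 / \<alpha>) *\<^sub>R (\<beta> *\<^sub>R dw t - dw (Suc t))" for t
  proof -
    have "G (W (Suc t)) = (1 / \<alpha>) *\<^sub>R (\<alpha> *\<^sub>R G (W (Suc t)))" using eta_pos beta by simp
    then show ?thesis by (simp add: dw_Suc)
  qed
  moreover have "(\<lambda>t. (1 / \<alpha>) *\<^sub>R (\<beta> *\<^sub>R dw t - dw (Suc t))) \<longlonglongrightarrow> (1 / \<alpha>) *\<^sub>R (\<beta> *\<^sub>R 0 - 0)"
    by (intro tendsto_intros dw0 LIMSEQ_Suc)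
  ultimately have "(\<lambda>t. G (W (Suc t))) \<longlonglongrightarrow> 0" by simp
  then show ?thesis using filterlim_sequentially_Suc by blast
qed

end

section \<open>The potential\<close>

locale gdm_potential = gdm l l' X \<beta> \<eta> w0
  for l l' :: "real \<Rightarrow> real" and X :: "'n::finite \<Rightarrow> real^'d" and \<beta> \<eta> :: real and w0 :: "real^'d" +
  fixes wt :: "real^'d" and v :: "'n \<Rightarrow> real"
  assumes separable: "\<exists>w. \<forall>i. w \<bullet> X i > 0"
    and tail_upper: "\<exists>\<mu>p xp. \<mu>p > 0 \<and> xp > 0 \<and> (\<forall>x>xp. - l' x \<le> (1 + exp (- \<mu>p * x)) * exp (- x))"
    and tail_lower: "\<exists>\<mu>m xm. \<mu>m > 0 \<and> xm > 0 \<and> (\<forall>x>xm. - l' x \<ge> (1 - exp (- \<mu>m * x)) * exp (- x))"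
    and max_margin_eq: "max_margin X = (\<Sum>i\<in>UNIV. v i *\<^sub>R X i)"
    and v_pos: "\<And>i. i \<in> support_set X \<Longrightarrow> v i > 0"
    and v_zero: "\<And>i. i \<notin> support_set X \<Longrightarrow> v i = 0"
    and wt: "\<And>i. i \<in> support_set X \<Longrightarrow> (\<eta> / real CARD('n)) * exp (- (X i \<bullet> wt)) = v i"
begin

abbreviation "r \<equiv> res_r l' X \<beta> \<eta> w0 wt"
abbreviation "g \<equiv> pot_g l' X \<beta> \<eta> w0 wt"
abbreviation "wh \<equiv> max_margin X"

lemma abs_deriv_le_grad:
  assumes u: "\<forall>j. u \<bullet> X j > 0"
  shows "\<bar>l' (w \<bullet> X i)\<bar> * (X i \<bullet> u) \<le> real CARD('n) * (norm (G w) * norm u)"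
proof -
  define f where "f j = l' (w \<bullet> X j) * (X j \<bullet> u)" for j
  have nonpos: "f j \<le> 0" for j
  proof -
    have "X j \<bullet> u > 0" using u by (simp add: inner_commute)
    then show ?thesis using deriv_neg[of "w \<bullet> X j"] by (simp add: f_def mult_nonpos_nonneg)
  qed
  have "real CARD('n) * (G w \<bullet> u) = (\<Sum>j\<in>UNIV. f j)" by (simp add: G_inner f_def)
  also have "\<dots> = f i + (\<Sum>j\<in>UNIV - {i}. f j)" by (simp add: sum.remove)
  also have "\<dots> \<le> f i" using sum_nonpos[of "UNIV - {i}" f] nonpos by simp
  finally have "- f i \<le> - (real CARD('n) * (G w \<bullet> u))" by simp
  moreover have "\<bar>l' (w \<bullet> X i)\<bar> * (X i \<bullet> u) = - f i" using deriv_neg[of "w \<bullet> X i"] by (simp add: f_def)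
  moreover have "- (G w \<bullet> u) \<le> norm (G w) * norm u"
    using Cauchy_Schwarz_ineq2[of "G w" u] by (simp add: abs_le_iff)
  then have "- (real CARD('n) * (G w \<bullet> u)) \<le> real CARD('n) * (norm (G w) * norm u)"
    by (metis mult_left_mono mult_minus_right of_nat_0_le_iff)
  ultimately show ?thesis by linarith
qed

lemma margin_tendsto_infinity: "filterlim (\<lambda>t. W t \<bullet> X i) at_top sequentially"
proof (rule filterlim_at_top_if_deriv_tendsto_zero)
  obtain u where u: "\<forall>j. u \<bullet> X j > 0" using separable by blast
  then have ui: "X i \<bullet> u > 0" by (simp add: inner_commute)
  have "(\<lambda>t. real CARD('n) * (norm (G (W t)) * norm u) / (X i \<bullet> u)) \<longlonglongrightarrow> real CARD('n) * (norm (0::real^'d) * norm u) / (X i \<bullet> u)"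
    by (intro tendsto_intros grad_tendsto_zero) (use ui in simp)
  then have lim: "(\<lambda>t. real CARD('n) * (norm (G (W t)) * norm u) / (X i \<bullet> u)) \<longlonglongrightarrow> 0" by simp
  have "norm (l' (W t \<bullet> X i)) \<le> real CARD('n) * (norm (G (W t)) * norm u) / (X i \<bullet> u)" for t
    using abs_deriv_le_grad[OF u, of "W t" i] ui by (simp add: pos_le_divide_eq)
  then show "(\<lambda>t. l' (W t \<bullet> X i)) \<longlonglongrightarrow> 0"
    by (intro Lim_null_comparison[OF always_eventually lim]) simp
qed

definition "log_incr k = ln (real (Suc (Suc k))) - ln (real (Suc k))"

lemma log_incr_bounds: "1 / real (Suc (Suc k)) \<le> log_incr k" "log_incr k \<le> 1 / real (Suc k)"
  using ln_Suc_diff_bounds[of "real (Suc k)"] by (simp_all add: log_incr_def add.commute)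

lemma res_eq: "r t = W t - ln (real t) *\<^sub>R wh - wt" by (simp add: res_r_def)

lemma res_Suc_diff: "r (Suc (Suc k)) - r (Suc k) = dw (Suc k) - log_incr k *\<^sub>R wh"
  by (simp add: res_eq dw_def log_incr_def algebra_simps)

lemma dw_momentum_eq: "dw (Suc k) + (\<beta> / (1 - \<beta>)) *\<^sub>R (dw (Suc k) - dw k) = - \<eta> *\<^sub>R G (W (Suc k))"
proof -
  define b where "b = \<beta> / (1 - \<beta>)"
  have "dw (Suc k) + b *\<^sub>R (dw (Suc k) - dw k)
      = (\<beta> + b * (\<beta> - 1)) *\<^sub>R dw k + (- (\<alpha> + b * \<alpha>)) *\<^sub>R G (W (Suc k))"
    by (simp add: dw_Suc algebra_simps)
  also have "\<beta> + b * (\<beta> - 1) = 0" using beta by (simp add: b_def field_simps)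
  also have "\<alpha> + b * \<alpha> = \<eta>" using beta by (simp add: b_def field_simps)
  finally show ?thesis by (simp add: b_def)
qed

lemma pot_Suc_diff: "g (Suc (Suc k)) - g (Suc k) =
   (- \<eta> *\<^sub>R G (W (Suc k)) - log_incr k *\<^sub>R wh) \<bullet> r (Suc k) + (1/2) * norm (r (Suc (Suc k)) - r (Suc k)) ^ 2"
proof -
  define S where "S = (\<Sum>\<tau>=2..Suc k. (r \<tau> - r (\<tau> - 1)) \<bullet> (W \<tau> - W (\<tau> - 1)))"
  have "g (Suc (Suc k)) = (1/2) * norm (r (Suc (Suc k))) ^ 2 + (\<beta> / (1 - \<beta>)) * (r (Suc (Suc k)) \<bullet> dw (Suc k))
     - (\<beta> / (1 - \<beta>)) * (S + (r (Suc (Suc k)) - r (Suc k)) \<bullet> dw (Suc k))"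
    by (simp add: pot_g_def Let_def S_def dw_def)
  moreover have "g (Suc k) = (1/2) * norm (r (Suc k)) ^ 2 + (\<beta> / (1 - \<beta>)) * (r (Suc k) \<bullet> dw k) - (\<beta> / (1 - \<beta>)) * S"
    by (simp add: pot_g_def Let_def S_def dw_def)
  ultimately show ?thesis
    using potential_step_identity[OF res_Suc_diff dw_momentum_eq] by simp
qed

definition "drift k = (- \<eta> *\<^sub>R G (W (Suc k)) - log_incr k *\<^sub>R wh) \<bullet> r (Suc k)"

lemma drift_eq_sum: "drift k =
   (\<Sum>i\<in>UNIV. (\<eta> / real CARD('n)) * (- l' (W (Suc k) \<bullet> X i)) * (X i \<bullet> r (Suc k))
      - log_incr k * v i * (X i \<bullet> r (Suc k)))"
proof -
  have "wh \<bullet> r (Suc k) = (\<Sum>i\<in>UNIV. v i * (X i \<bullet> r (Suc k)))"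
    by (simp add: max_margin_eq inner_sum_left)
  then show ?thesis unfolding drift_def inner_diff_left inner_scaleR_left G_inner
    by (simp add: sum_subtractf sum_distrib_left sum_negf algebra_simps)
qed

lemma margin_decomp: "W t \<bullet> X i = ln (real t) * (X i \<bullet> wh) + X i \<bullet> wt + X i \<bullet> r t"
  by (simp add: res_eq inner_commute inner_diff_right)

definition "drift_bound \<mu>p \<mu>m i k = (let t = real (Suc k); a = X i \<bullet> wt in
   if i \<in> support_set X then v i * (exp (- \<mu>p * a) * t powr - (1 + \<mu>p) + t powr - 2
        + exp (1 + \<mu>m) * exp (- \<mu>m * a) * t powr - (1 + \<mu>m))
   else (\<eta> / real CARD('n)) * (2 * exp (- a) * t powr - (X i \<bullet> wh)))"

lemma drift_bound_nonneg: "drift_bound \<mu>p \<mu>m i k \<ge> 0"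
  using v_pos[of i] eta_pos by (auto simp: drift_bound_def Let_def)

lemma summable_drift_bound:
  assumes "\<mu>p > 0" "\<mu>m > 0" shows "summable (drift_bound \<mu>p \<mu>m i)"
proof (cases "i \<in> support_set X")
  case True
  then show ?thesis unfolding drift_bound_def Let_def using assms
    by (simp only: if_True) (intro summable_mult summable_add summable_Suc_powr; simp)
next
  case False
  then show ?thesis unfolding drift_bound_def Let_def
    using margin_gt_one_if_not_support[OF separable False]
    by (simp only: if_False) (intro summable_mult summable_Suc_powr)
qed

lemma drift_term_le:
  assumes \<mu>p: "\<mu>p > 0" and hp: "\<forall>x>xp. - l' x \<le> (1 + exp (- \<mu>p * x)) * exp (- x)"
    and \<mu>m: "\<mu>m > 0" and hm: "\<forall>x>xm. - l' x \<ge> (1 - exp (- \<mu>m * x)) * exp (- x)"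
    and large: "W (Suc k) \<bullet> X i > max (max xp xm) (max 0 (ln 2 / \<mu>m))"
  shows "(\<eta> / real CARD('n)) * (- l' (W (Suc k) \<bullet> X i)) * (X i \<bullet> r (Suc k))
      - log_incr k * v i * (X i \<bullet> r (Suc k)) \<le> drift_bound \<mu>p \<mu>m i k"
proof -
  define t where "t = real (Suc k)"
  define m where "m = W (Suc k) \<bullet> X i"
  define u where "u = X i \<bullet> r (Suc k)"
  define a where "a = X i \<bullet> wt"
  define K where "K = \<eta> / real CARD('n)"
  define y where "y = - l' m"
  have t: "t \<ge> 1" "t > 0" by (auto simp: t_def)
  have K: "K > 0" using eta_pos by (simp add: K_def)
  have m: "m > xp" "m > xm" "m > 0" "m > ln 2 / \<mu>m" using large by (auto simp: m_def)
  have incr: "1 / (t + 1) \<le> log_incr k" "log_incr k \<le> 1 / t"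
    using log_incr_bounds[of k] by (simp_all add: t_def add.commute)
  have md: "m = (X i \<bullet> wh) * ln t + a + u"
    using margin_decomp[of "Suc k" i] by (simp add: m_def t_def a_def u_def mult.commute)
  have yup: "y \<le> (1 + exp (- \<mu>p * m)) * exp (- m)" using hp m by (simp add: y_def)
  have lhs: "(\<eta> / real CARD('n)) * (- l' (W (Suc k) \<bullet> X i)) * (X i \<bullet> r (Suc k))
      - log_incr k * v i * (X i \<bullet> r (Suc k)) = K * y * u - log_incr k * v i * u"
    by (simp add: K_def y_def m_def u_def)
  show ?thesis
  proof (cases "i \<in> support_set X")
    case False
    have "(1 + exp (- \<mu>p * m)) * exp (- m) \<le> 2 * exp (- m)" using \<mu>p m by simp
    then have "y \<le> 2 * exp (- m)" using yup by linarith
    moreover have "y > 0" using deriv_neg[of m] by (simp add: y_def)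
    ultimately have "y * u \<le> 2 * exp (- a) * t powr - (X i \<bullet> wh)"
      using nonsupport_term_le[OF _ _ md t(2)] by blast
    then have "K * (y * u) \<le> K * (2 * exp (- a) * t powr - (X i \<bullet> wh))" using K by simp
    then show ?thesis unfolding lhs using False v_zero[OF False]
      by (simp add: drift_bound_def Let_def K_def a_def t_def mult.assoc)
  next
    case True
    have md1: "m = ln t + a + u" using md True by (simp add: support_set_def inner_commute)
    have Kv: "K * exp (- a) = v i" using wt[OF True] by (simp add: K_def a_def)
    have ylo: "(1 - exp (- \<mu>m * m)) * exp (- m) \<le> y" using hm m by (simp add: y_def)
    have "ln 2 < \<mu>m * m" using m \<mu>m by (simp add: divide_less_eq mult.commute)
    then have "exp (- \<mu>m * m) < exp (- ln 2)" by simp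
    then have half: "exp (- \<mu>m * m) \<le> 1 / 2" by (simp add: exp_minus)
    have "drift_bound \<mu>p \<mu>m i k = v i * (exp (- \<mu>p * a) * t powr - (1 + \<mu>p) + t powr - 2)
        + v i * (exp (1 + \<mu>m) * exp (- \<mu>m * a) * t powr - (1 + \<mu>m))"
      using True by (simp add: drift_bound_def Let_def a_def t_def algebra_simps)
    then show ?thesis unfolding lhs
      using support_term_le[OF yup ylo md1 t(1) \<mu>p \<mu>m K Kv incr half] by simp
  qed
qed

lemma eventually_drift_le:
  obtains \<mu>p \<mu>m where "\<mu>p > 0" "\<mu>m > 0"
    "eventually (\<lambda>k. drift k \<le> (\<Sum>i\<in>UNIV. drift_bound \<mu>p \<mu>m i k)) sequentially"
proof -
  obtain \<mu>p xp where hp: "\<mu>p > 0" "\<forall>x>xp. - l' x \<le> (1 + exp (- \<mu>p * x)) * exp (- x)"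
    using tail_upper by blast
  obtain \<mu>m xm where hm: "\<mu>m > 0" "\<forall>x>xm. - l' x \<ge> (1 - exp (- \<mu>m * x)) * exp (- x)"
    using tail_lower by blast
  define C where "C = max (max xp xm) (max 0 (ln 2 / \<mu>m))"
  have "eventually (\<lambda>k. C < W (Suc k) \<bullet> X i) sequentially" for i
    using margin_tendsto_infinity[of i] eventually_sequentially_Suc[of "\<lambda>t. C < W t \<bullet> X i"]
    unfolding filterlim_at_top_dense by blast
  then have "eventually (\<lambda>k. \<forall>i. C < W (Suc k) \<bullet> X i) sequentially" by (rule eventually_all_finite)
  then have "eventually (\<lambda>k. drift k \<le> (\<Sum>i\<in>UNIV. drift_bound \<mu>p \<mu>m i k)) sequentially"
  proof (rule eventually_mono)
    fix k assume "\<forall>i. C < W (Suc k) \<bullet> X i"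
    then show "drift k \<le> (\<Sum>i\<in>UNIV. drift_bound \<mu>p \<mu>m i k)"
      unfolding drift_eq_sum by (intro sum_mono drift_term_le[OF hp hm]) (simp add: C_def)
  qed
  then show ?thesis using that hp hm by blast
qed

lemma norm_res_Suc_diff_sq_le:
  "norm (r (Suc (Suc k)) - r (Suc k)) ^ 2 \<le> 2 * norm (dw (Suc k)) ^ 2 + 2 * norm wh ^ 2 * real (Suc k) powr - 2"
proof -
  have "log_incr k ^ 2 \<le> (1 / real (Suc k)) ^ 2"
    using log_incr_bounds[of k] by (intro power_mono) (auto intro: order_trans[rotated])
  also have "\<dots> = real (Suc k) powr - 2" by (simp add: powr_minus_divide powr_realpow power_one_over)
  finally have "2 * log_incr k ^ 2 * norm wh ^ 2 \<le> 2 * real (Suc k) powr - 2 * norm wh ^ 2"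
    by (intro mult_right_mono) auto
  then show ?thesis
    using norm_diff_scaleR_sq_le[of "dw (Suc k)" "log_incr k" wh] by (simp add: res_Suc_diff algebra_simps)
qed

lemma summable_dw_Suc_sq: "summable (\<lambda>k. norm (dw (Suc k)) ^ 2)"
  using summable_dw_sq summable_Suc_iff[where f = "\<lambda>k. norm (dw k) ^ 2"] by simp

lemma pot_increments_bounded: "\<exists>C. \<forall>n. (\<Sum>k<n. g (Suc (Suc k)) - g (Suc k)) \<le> C"
proof -
  obtain \<mu>p \<mu>m where \<mu>: "\<mu>p > 0" "\<mu>m > 0"
    and ev: "eventually (\<lambda>k. drift k \<le> (\<Sum>i\<in>UNIV. drift_bound \<mu>p \<mu>m i k)) sequentially"
    using eventually_drift_le by blast
  define b where "b k = (\<Sum>i\<in>UNIV. drift_bound \<mu>p \<mu>m i k) + norm (dw (Suc k)) ^ 2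
      + norm wh ^ 2 * real (Suc k) powr - 2" for k
  have "summable b" unfolding b_def using \<mu> summable_dw_Suc_sq
    by (intro summable_add summable_sum summable_drift_bound summable_mult summable_Suc_powr) auto
  moreover have "b k \<ge> 0" for k
    unfolding b_def using drift_bound_nonneg by (intro add_nonneg_nonneg sum_nonneg) auto
  moreover have "eventually (\<lambda>k. g (Suc (Suc k)) - g (Suc k) \<le> b k) sequentially"
    using ev
  proof (rule eventually_mono)
    fix k assume "drift k \<le> (\<Sum>i\<in>UNIV. drift_bound \<mu>p \<mu>m i k)"
    then show "g (Suc (Suc k)) - g (Suc k) \<le> b k"
      using norm_res_Suc_diff_sq_le[of k] unfolding pot_Suc_diff drift_def[symmetric] b_def by simp
  qed
  ultimately show ?thesis by (rule bounded_partial_sums_if_eventually_le_summable)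
qed

lemma pot_bounded: "\<exists>C. \<forall>t\<ge>1. g t \<le> C"
proof -
  obtain C where C: "\<And>n. (\<Sum>k<n. g (Suc (Suc k)) - g (Suc k)) \<le> C" using pot_increments_bounded by blast
  have "g (Suc j) \<le> g 1 + C" for j
    using sum_lessThan_telescope[of "\<lambda>i. g (Suc i)" j] C[of j] by simp
  then have "g t \<le> g 1 + C" if "t \<ge> 1" for t
    using that by (cases t) auto
  then show ?thesis by blast
qed

lemma sum_pot_correction_eq:
  "(\<Sum>\<tau>=2..Suc j. (r \<tau> - r (\<tau> - 1)) \<bullet> (W \<tau> - W (\<tau> - 1)))
     = (\<Sum>k<j. (r (Suc (Suc k)) - r (Suc k)) \<bullet> dw (Suc k))"
  by (induction j) (simp_all add: dw_def)

lemma norm_dw_le: "norm (dw j) \<le> sqrt (Lf w0 / gain)"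
proof -
  have "norm (dw j) ^ 2 \<le> (\<Sum>k<Suc j. norm (dw k) ^ 2)" by (rule member_le_sum) auto
  also have "\<dots> \<le> Lf w0 / gain" by (rule sum_dw_sq_le)
  finally show ?thesis by (simp add: real_le_rsqrt)
qed

lemma sum_res_diff_inner_dw_bounded:
  "\<exists>B. \<forall>j. \<bar>\<Sum>k<j. (r (Suc (Suc k)) - r (Suc k)) \<bullet> dw (Suc k)\<bar> \<le> B"
proof -
  define s where "s k = 2 * norm (dw (Suc k)) ^ 2 + norm wh ^ 2 * real (Suc k) powr - 2" for k
  have "summable s" unfolding s_def
    using summable_dw_Suc_sq by (intro summable_add summable_mult summable_Suc_powr) auto
  have A: "\<bar>\<Sum>k<j. (r (Suc (Suc k)) - r (Suc k)) \<bullet> dw (Suc k)\<bar> \<le> (\<Sum>k<j. s k)" for j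
  proof (rule order_trans[OF sum_abs sum_mono])
    fix k
    show "\<bar>(r (Suc (Suc k)) - r (Suc k)) \<bullet> dw (Suc k)\<bar> \<le> s k"
      using abs_inner_le_half_sq[of "r (Suc (Suc k)) - r (Suc k)" "dw (Suc k)"]
        norm_res_Suc_diff_sq_le[of k] zero_le_power2[of "norm (dw (Suc k))"]
      unfolding s_def by linarith
  qed
  moreover have "(\<Sum>k<j. s k) \<le> suminf s" for j
    using \<open>summable s\<close> by (rule sum_le_suminf) (auto simp: s_def)
  ultimately show ?thesis by (meson order_trans)
qed

lemma res_bounded: "\<exists>R. \<forall>t\<ge>1. norm (r t) \<le> R"
proof -
  obtain C where C: "\<And>t. t \<ge> 1 \<Longrightarrow> g t \<le> C" using pot_bounded by blast
  obtain B where B: "\<And>j. \<bar>\<Sum>k<j. (r (Suc (Suc k)) - r (Suc k)) \<bullet> dw (Suc k)\<bar> \<le> B"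
    using sum_res_diff_inner_dw_bounded by blast
  define b where "b = \<beta> / (1 - \<beta>)"
  define DB where "DB = sqrt (Lf w0 / gain)"
  have b: "b \<ge> 0" using beta by (simp add: b_def)
  have DB: "DB \<ge> 0" using Lf_pos[of w0] gain_pos by (simp add: DB_def)
  have "norm (r (Suc j)) \<le> max 1 (2 * max 0 (C + b * B) + 2 * b * DB)" for j
  proof -
    define x where "x = norm (r (Suc j))"
    define S where "S = (\<Sum>k<j. (r (Suc (Suc k)) - r (Suc k)) \<bullet> dw (Suc k))"
    have "g (Suc j) = (1/2) * x^2 + b * (r (Suc j) \<bullet> dw j) - b * S"
      unfolding pot_g_def Let_def x_def S_def b_def using sum_pot_correction_eq[of j] by (simp add: dw_def)
    moreover have "- (x * DB) \<le> r (Suc j) \<bullet> dw j"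
      using Cauchy_Schwarz_ineq2[of "r (Suc j)" "dw j"] mult_left_mono[OF norm_dw_le[of j], of x]
      unfolding x_def DB_def by (simp add: abs_le_iff)
    then have "- (b * (x * DB)) \<le> b * (r (Suc j) \<bullet> dw j)" using b by (metis mult_left_mono mult_minus_right)
    moreover have "b * S \<le> b * B" using B[of j] b by (intro mult_left_mono) (auto simp: S_def)
    ultimately have "(1/2) * x^2 \<le> C + b * B + b * (x * DB)" using C[of "Suc j"] by linarith
    then have "x^2 \<le> 2 * (C + b * B) + 2 * b * DB * x" by (simp add: algebra_simps)
    then have "x^2 \<le> 2 * max 0 (C + b * B) + 2 * b * DB * x" by (simp add: max_def)
    then show ?thesis unfolding x_def[symmetric] using b DB
      by (intro le_max_one_if_sq_le) (auto simp: x_def)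
  qed
  then have "norm (r t) \<le> max 1 (2 * max 0 (C + b * B) + 2 * b * DB)" if "t \<ge> 1" for t
    using that by (cases t) auto
  then show ?thesis by blast
qed

end

theorem lemma2:
  fixes X :: "'n::finite \<Rightarrow> real^'d"
    and l l' :: "real \<Rightarrow> real"
    and \<beta> \<eta> :: real
    and w0 wt :: "real^'d"
    and v :: "'n \<Rightarrow> real"
  assumes A1: "\<exists>w. \<forall>i. w \<bullet> X i > 0"
    and A2_deriv: "\<And>x. (l has_real_derivative l' x) (at x)"
    and A2_neg: "\<And>x. l' x < 0"
    and A2_lim: "(l \<longlongrightarrow> 0) at_top" "(l' \<longlongrightarrow> 0) at_top"
    and A2_limsup: "Limsup at_bot (\<lambda>x. ereal (l' x)) < 0"
    and A2_upper: "\<exists>\<mu>p xp. \<mu>p > 0 \<and> xp > 0 \<and>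
                     (\<forall>x>xp. - l' x \<le> (1 + exp (- \<mu>p * x)) * exp (- x))"
    and A2_lower: "\<exists>\<mu>m xm. \<mu>m > 0 \<and> xm > 0 \<and>
                     (\<forall>x>xm. - l' x \<ge> (1 - exp (- \<mu>m * x)) * exp (- x))"
    and A3: "\<And>s0. \<exists>C. \<forall>x y. x \<ge> s0 \<longrightarrow> y \<ge> s0 \<longrightarrow> \<bar>l' x - l' y\<bar> \<le> C * \<bar>x - y\<bar>"
    and beta: "0 \<le> \<beta>" "\<beta> < 1"
    and eta_pos: "0 < \<eta>"
    and eta_bound: "\<eta> < 2 * real CARD('n) /
          (sigma_max X ^ 2 * lip_H l' (inv l (real CARD('n) * emp_loss l X (gdm_w l' X \<beta> \<eta> w0 1))))"
    and generic_indep: "\<And>I c. card I \<le> CARD('d) \<Longrightarrow> (\<Sum>i\<in>I. c i *\<^sub>R X i) = 0 \<Longrightarrow> \<forall>i\<in>I. c i = 0"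
    and generic_v: "max_margin X = (\<Sum>i\<in>UNIV. v i *\<^sub>R X i)"
                   "\<And>i. i \<in> support_set X \<Longrightarrow> v i > 0"
                   "\<And>i. i \<notin> support_set X \<Longrightarrow> v i = 0"
    and wt: "\<And>i. i \<in> support_set X \<Longrightarrow> (\<eta> / real CARD('n)) * exp (- (X i \<bullet> wt)) = v i"
  shows "(bdd_above ((\<lambda>t. norm (res_r l' X \<beta> \<eta> w0 wt t)) ` {1..})
             \<longleftrightarrow> bdd_above (pot_g l' X \<beta> \<eta> w0 wt ` {1..}))
         \<and> bdd_above ((\<lambda>T. \<Sum>t=1..T. pot_g l' X \<beta> \<eta> w0 wt (t + 1) - pot_g l' X \<beta> \<eta> w0 wt t) ` {1..})
         \<and> bdd_above (pot_g l' X \<beta> \<eta> w0 wt ` {1..})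
         \<and> bdd_above ((\<lambda>t. norm (res_r l' X \<beta> \<eta> w0 wt t)) ` {1..})"
  
proof -
  interpret gdm_potential l l' X \<beta> \<eta> w0 wt v
    using A1 A2_deriv A2_neg A2_lim A2_limsup A3 A2_upper A2_lower beta eta_pos eta_bound generic_v wt
    by unfold_locales auto
  obtain R where R: "\<And>t. t \<ge> 1 \<Longrightarrow> norm (r t) \<le> R" using res_bounded by blast
  obtain C where C: "\<And>t. t \<ge> 1 \<Longrightarrow> g t \<le> C" using pot_bounded by blast
  have r_bdd: "bdd_above ((\<lambda>t. norm (r t)) ` {1..})" using R by (intro bdd_aboveI2) auto
  have g_bdd: "bdd_above (g ` {1..})" using C by (intro bdd_aboveI2) auto
  have "(\<Sum>t=1..T. g (t + 1) - g t) \<le> C - g 1" for T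
    using sum_Suc_diff[of 1 T g] C[of "Suc T"] by simp
  then have "bdd_above ((\<lambda>T. \<Sum>t=1..T. g (t + 1) - g t) ` {1..})" by (intro bdd_aboveI2) auto
  with r_bdd g_bdd show ?thesis by blast
qed

end
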